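(* Let $A,B$ be types with $A \sim B$, $\ell$ a label, and $\rho_1,\rho_{21},\rho_{22}$ rows with $\rho_{21}\odot\rho_{22}$ defined. If $\rho_1 \sim \rho_{21}\odot\rho_{22}$ and $\ell\notin\mathit{dom}(\rho_{21})$, then there exist rows $\rho_{11},\rho_{12}$ (with $\rho_{11}$ of the form $\ell_1{:}C_1;\dots;\ell_n{:}C_n;\cdot$) such that: (i) $\rho_1 \equiv \rho_{11}\odot\rho_{12}$; (ii) $\rho_{11}\odot(\ell{:}A;\cdot)\odot\rho_{12} \sim \rho_{21}\odot(\ell{:}B;\cdot)\odot\rho_{22}$; (iii) if $\rho_{21}\odot\rho_{22}$ ends with $\star$, then $\rho_{11}\odot(\ell{:}A;\cdot)\odot\rho_3\odot\rho_{12} \sim \rho_{21}\odot(\ell{:}B;\cdot)\odot\rho_{22}$ for every row $\rho_3$ of the form $\ell'_1{:}D_1;\dots;\ell'_m{:}D_m;\cdot$ with $\mathit{dom}(\rho_3)\cap\mathit{dom}(\rho_{21}\odot\rho_{22})=\emptyset$; (iv) $\ell\notin\mathit{dom}(\rho_{11})$.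
   Context: Types and rows share one grammar: $A,B,C,\rho ::= X \mid \alpha \mid \star \mid \iota \mid A\to B \mid \forall X{:}K.\,A \mid [\rho] \mid \langle\rho\rangle \mid \cdot \mid \ell{:}A;\rho$, where $X$ ranges over type variables (bound by $\forall$), $\alpha$ over type names, $\star$ is the dynamic type (also serving as the dynamic row), $\iota$ over base types, $[\rho]$ and $\langle\rho\rangle$ are record and variant types, $\cdot$ is the empty row, $\ell$ ranges over labels, and $K\in\{\mathsf T,\mathsf R\}$ is a kind. Types are identified up to renaming of bound variables; $\mathit{ftv}(A)$ is the set of free type variables. $\mathbf{QPoly}(A)$ holds iff $A$ is not of the form $\forall X{:}K.\,B$ and $\star$ occurs in $A$. Row concatenation $\rho_1\odot\rho_2$ is defined only when $\rho_1=\ell_1{:}A_1;\dots;\ell_n{:}A_n;\cdot$, and then equals $\ell_1{:}A_1;\dots;\ell_n{:}A_n;\rho_2$. $\mathit{dom}(\rho)$ is the set of labels in the top-level label prefix of $\rho$. A row $\rho$ ends with $\star$ if $\rho=\rho'\odot\star$ for some $\rho'$. Type equivalence $\equiv$ is the least equivalence relation that is a congruence for $\to$, $\forall X{:}K.\,-$, $[-]$, $\langle-\rangle$ and $\ell{:}-;-$, and contains $\ell{:}A;\ell'{:}B;\rho \equiv \ell'{:}B;\ell{:}A;\rho$ whenever $\ell\neq\ell'$. The relation $\sim$ is defined inductively: $A\sim A$; $\star\sim A$; $A\sim\star$; $A_1\to A_2\sim B_1\to B_2$ if $A_1\sim B_1$ and $A_2\sim B_2$; $\forall X{:}K.A\sim\forall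 X{:}K.B$ if $A\sim B$; $\forall X{:}K.A\sim B$ if $\mathbf{QPoly}(B)$, $X\notin\mathit{ftv}(B)$ and $A\sim B$; $A\sim\forall X{:}K.B$ if $\mathbf{QPoly}(A)$, $X\notin\mathit{ftv}(A)$ and $A\sim B$; $[\rho_1]\sim[\rho_2]$ and $\langle\rho_1\rangle\sim\langle\rho_2\rangle$ if $\rho_1\sim\rho_2$; $\ell{:}A;\rho_1\sim\ell{:}B;\rho_2$ if $A\sim B$ and $\rho_1\sim\rho_2$; $\ell{:}A;\rho_1\sim\rho_2$ if $\ell\notin\mathit{dom}(\rho_2)$, $\rho_2$ ends with $\star$ and $\rho_1\sim\rho_2$; $\rho_1\sim\ell{:}B;\rho_2$ if $\ell\notin\mathit{dom}(\rho_1)$, $\rho_1$ ends with $\star$ and $\rho_1\sim\rho_2$. *)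

theory Defs
  imports Main
begin

datatype kind = KT | KR

type_synonym label = string

text \<open>Types and rows share one grammar. Type variables bound by \<forall> are
  de Bruijn indices (so alpha-equivalence is syntactic equality).\<close>
datatype ty =
    TVar nat
  | TName nat
  | Dyn
  | Base nat
  | Fun ty ty
  | All kind ty         (* \<forall>X:K. A, X = index 0 in body *)
  | Record ty
  | Variant ty
  | REmpty
  | RExt label ty ty

fun lift :: "nat \<Rightarrow> ty \<Rightarrow> ty" where
  "lift k (TVar n) = (if n < k then TVar n else TVar (Suc n))"
| "lift k (TName a) = TName a"
| "lift k Dyn = Dyn"
| "lift k (Base i) = Base i"
| "lift k (Fun A B) = Fun (lift k A) (lift k B)"
| "lift k (All K A) = All K (lift (Suc k) A)"
| "lift k (Record r) = Record (lift k r)"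
| "lift k (Variant r) = Variant (lift k r)"
| "lift k REmpty = REmpty"
| "lift k (RExt l A r) = RExt l (lift k A) (lift k r)"

fun has_dyn :: "ty \<Rightarrow> bool" where
  "has_dyn (TVar n) = False"
| "has_dyn (TName a) = False"
| "has_dyn Dyn = True"
| "has_dyn (Base i) = False"
| "has_dyn (Fun A B) = (has_dyn A \<or> has_dyn B)"
| "has_dyn (All K A) = has_dyn A"
| "has_dyn (Record r) = has_dyn r"
| "has_dyn (Variant r) = has_dyn r"
| "has_dyn REmpty = False"
| "has_dyn (RExt l A r) = (has_dyn A \<or> has_dyn r)"

fun is_all :: "ty \<Rightarrow> bool" where
  "is_all (All K A) = True"
| "is_all _ = False"

definition QPoly :: "ty \<Rightarrow> bool" where
  "QPoly A \<longleftrightarrow> \<not> is_all A \<and> has_dyn A"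

fun closed_row :: "ty \<Rightarrow> bool" where
  "closed_row REmpty = True"
| "closed_row (RExt l A r) = closed_row r"
| "closed_row _ = False"

text \<open>Row concatenation; only meaningful when the first argument is a closed row.\<close>
fun rcat :: "ty \<Rightarrow> ty \<Rightarrow> ty" where
  "rcat REmpty r = r"
| "rcat (RExt l A r1) r = RExt l A (rcat r1 r)"
| "rcat r1 r = undefined"

fun rdom :: "ty \<Rightarrow> label set" where
  "rdom (RExt l A r) = insert l (rdom r)"
| "rdom _ = {}"

definition ends_dyn :: "ty \<Rightarrow> bool" where
  "ends_dyn r \<longleftrightarrow> (\<exists>r'. closed_row r' \<and> r = rcat r' Dyn)"

inductive is_type and is_row where
  "is_type (TVar n)"
| "is_type (TName a)"
| "is_type Dyn"
| "is_type (Base i)"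
| "is_type A \<Longrightarrow> is_type B \<Longrightarrow> is_type (Fun A B)"
| "is_type A \<Longrightarrow> is_type (All K A)"
| "is_row r \<Longrightarrow> is_type (Record r)"
| "is_row r \<Longrightarrow> is_type (Variant r)"
| "is_row (TVar n)"
| "is_row (TName a)"
| "is_row Dyn"
| "is_row REmpty"
| "is_type A \<Longrightarrow> is_row r \<Longrightarrow> is_row (RExt l A r)"

inductive ty_eqv :: "ty \<Rightarrow> ty \<Rightarrow> bool" (infix "\<equiv>\<^sub>t" 50) where
  eqv_refl: "A \<equiv>\<^sub>t A"
| eqv_sym: "A \<equiv>\<^sub>t B \<Longrightarrow> B \<equiv>\<^sub>t A"
| eqv_trans: "A \<equiv>\<^sub>t B \<Longrightarrow> B \<equiv>\<^sub>t C \<Longrightarrow> A \<equiv>\<^sub>t C"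
| eqv_fun: "A1 \<equiv>\<^sub>t B1 \<Longrightarrow> A2 \<equiv>\<^sub>t B2 \<Longrightarrow> Fun A1 A2 \<equiv>\<^sub>t Fun B1 B2"
| eqv_all: "A \<equiv>\<^sub>t B \<Longrightarrow> All K A \<equiv>\<^sub>t All K B"
| eqv_rec: "A \<equiv>\<^sub>t B \<Longrightarrow> Record A \<equiv>\<^sub>t Record B"
| eqv_var: "A \<equiv>\<^sub>t B \<Longrightarrow> Variant A \<equiv>\<^sub>t Variant B"
| eqv_ext: "A \<equiv>\<^sub>t B \<Longrightarrow> r1 \<equiv>\<^sub>t r2 \<Longrightarrow> RExt l A r1 \<equiv>\<^sub>t RExt l B r2"
| eqv_swap: "l \<noteq> l' \<Longrightarrow> RExt l A (RExt l' B r) \<equiv>\<^sub>t RExt l' B (RExt l A r)"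

inductive consistent :: "ty \<Rightarrow> ty \<Rightarrow> bool" (infix "\<sim>" 50) where
  c_refl: "A \<sim> A"
| c_dynL: "Dyn \<sim> A"
| c_dynR: "A \<sim> Dyn"
| c_fun: "A1 \<sim> B1 \<Longrightarrow> A2 \<sim> B2 \<Longrightarrow> Fun A1 A2 \<sim> Fun B1 B2"
| c_all: "A \<sim> B \<Longrightarrow> All K A \<sim> All K B"
| c_allL: "QPoly B \<Longrightarrow> A \<sim> lift 0 B \<Longrightarrow> All K A \<sim> B"
| c_allR: "QPoly A \<Longrightarrow> lift 0 A \<sim> B \<Longrightarrow> A \<sim> All K B"
| c_rec: "r1 \<sim> r2 \<Longrightarrow> Record r1 \<sim> Record r2"
| c_var: "r1 \<sim> r2 \<Longrightarrow> Variant r1 \<sim> Variant r2"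
| c_ext: "A \<sim> B \<Longrightarrow> r1 \<sim> r2 \<Longrightarrow> RExt l A r1 \<sim> RExt l B r2"
| c_extL: "l \<notin> rdom r2 \<Longrightarrow> ends_dyn r2 \<Longrightarrow> r1 \<sim> r2 \<Longrightarrow> RExt l A r1 \<sim> r2"
| c_extR: "l \<notin> rdom r1 \<Longrightarrow> ends_dyn r1 \<Longrightarrow> r1 \<sim> r2 \<Longrightarrow> r1 \<sim> RExt l B r2"

end

theory Submission
  imports Defs
begin

text \<open>Induction on the derivation of \<open>\<rho>1 \<sim> \<rho>21 \<odot> \<rho>22\<close>, generalised over the way the
  right-hand side is split. A field of \<open>\<rho>1\<close> matched against a field of \<open>\<rho>21\<close>, or absorbed
  by the trailing \<open>\<star>\<close> on the right, is put into \<open>\<rho>11\<close>; a field of \<open>\<rho>21\<close> absorbed by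
  the trailing \<open>\<star>\<close> of \<open>\<rho>1\<close> changes nothing; once \<open>\<rho>21\<close> is used up, \<open>\<rho>11 = \<cdot>\<close> and
  \<open>\<rho>12 = \<rho>1\<close>. The one delicate case is an absorbed field of \<open>\<rho>1\<close> labelled \<open>\<ell>\<close>: it
  may not enter \<open>\<rho>11\<close>, so it goes to the front of \<open>\<rho>12\<close>, and clause (iii), applied to
  the padding \<open>\<rho>3 \<odot> (\<ell>:D;\<cdot>)\<close>, is exactly what keeps the induction going.\<close>

lemma rcat_assoc: "closed_row r1 \<Longrightarrow> rcat (rcat r1 r2) r3 = rcat r1 (rcat r2 r3)"
  by (induction r1) auto

lemma closed_row_rcat [simp]: "closed_row r1 \<Longrightarrow> closed_row (rcat r1 r2) = closed_row r2"
  by (induction r1) auto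

lemma rdom_rcat [simp]: "closed_row r1 \<Longrightarrow> rdom (rcat r1 r2) = rdom r1 \<union> rdom r2"
  by (induction r1) auto

inductive_cases is_row_RExtE: "is_row (RExt l A r)"

lemma is_row_rcat: "closed_row r1 \<Longrightarrow> is_row r1 \<Longrightarrow> is_row r2 \<Longrightarrow> is_row (rcat r1 r2)"
  by (induction r1) (auto elim: is_row_RExtE intro: is_type_is_row.intros)

lemma ends_dyn_Dyn [simp]: "ends_dyn Dyn"
  unfolding ends_dyn_def by (metis closed_row.simps(1) rcat.simps(1))

lemma ends_dyn_RExt [simp]: "ends_dyn (RExt l A r) \<longleftrightarrow> ends_dyn r"
proof
  assume "ends_dyn (RExt l A r)"
  then obtain r' where "closed_row r'" "RExt l A r = rcat r' Dyn"
    unfolding ends_dyn_def by blast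
  then show "ends_dyn r"
    unfolding ends_dyn_def by (cases r') auto
next
  assume "ends_dyn r"
  then obtain r' where "closed_row r'" "r = rcat r' Dyn"
    unfolding ends_dyn_def by blast
  then show "ends_dyn (RExt l A r)"
    unfolding ends_dyn_def by (metis closed_row.simps(2) rcat.simps(2))
qed

lemma ends_dyn_cases:
  assumes "ends_dyn r"
  obtains "r = Dyn" | l A r' where "r = RExt l A r'"
  using assms unfolding ends_dyn_def by (metis closed_row.elims(2) rcat.simps(1,2))

lemma ends_dyn_rcat [simp]: "closed_row r1 \<Longrightarrow> ends_dyn (rcat r1 r2) \<longleftrightarrow> ends_dyn r2"
  by (induction r1) auto

lemma ty_eqv_rdom: "A \<equiv>\<^sub>t B \<Longrightarrow> rdom A = rdom B"
  by (induction rule: ty_eqv.induct) auto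

lemma ty_eqv_ends_dyn: "A \<equiv>\<^sub>t B \<Longrightarrow> ends_dyn A \<longleftrightarrow> ends_dyn B"
  by (induction rule: ty_eqv.induct) (auto elim: ends_dyn_cases)

lemma rcat_consistent_left:
  "closed_row \<rho> \<Longrightarrow> rdom \<rho> \<inter> rdom \<tau> = {} \<Longrightarrow> ends_dyn \<tau> \<Longrightarrow> \<sigma> \<sim> \<tau> \<Longrightarrow> rcat \<rho> \<sigma> \<sim> \<tau>"
  by (induction \<rho>) (auto intro: c_extL)

lemma rcat_consistent_right:
  "closed_row \<rho> \<Longrightarrow> rdom \<rho> \<inter> rdom \<sigma> = {} \<Longrightarrow> ends_dyn \<sigma> \<Longrightarrow> \<sigma> \<sim> \<tau> \<Longrightarrow> \<sigma> \<sim> rcat \<rho> \<tau>"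
  by (induction \<rho>) (auto intro: c_extR)

lemma rcat_consistent_cong: "closed_row \<rho> \<Longrightarrow> \<sigma> \<sim> \<tau> \<Longrightarrow> rcat \<rho> \<sigma> \<sim> rcat \<rho> \<tau>"
  by (induction \<rho>) (auto intro: c_ext c_refl)

declare eqv_trans [trans]

lemma RExt_rcat_ty_eqv:
  "closed_row \<rho> \<Longrightarrow> l \<notin> rdom \<rho> \<Longrightarrow> RExt l D (rcat \<rho> \<sigma>) \<equiv>\<^sub>t rcat \<rho> (RExt l D \<sigma>)"
proof (induction \<rho>)
  case (RExt l' C \<rho>)
  then have "RExt l D (RExt l' C (rcat \<rho> \<sigma>)) \<equiv>\<^sub>t RExt l' C (RExt l D (rcat \<rho> \<sigma>))"
    by (auto intro: eqv_swap)
  also have "RExt l' C (RExt l D (rcat \<rho> \<sigma>)) \<equiv>\<^sub>t RExt l' C (rcat \<rho> (RExt l D \<sigma>))"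
    using RExt by (auto intro: eqv_ext eqv_refl)
  finally show ?case by simp
qed (auto intro: eqv_refl)

lemma rcat_eq_RExtE:
  assumes "closed_row \<rho>" "RExt l C \<tau> = rcat \<rho> \<sigma>"
  obtains "\<rho> = REmpty" | \<rho>' where "\<rho> = RExt l C \<rho>'" "closed_row \<rho>'" "\<tau> = rcat \<rho>' \<sigma>"
  using assms by (cases \<rho>) auto

definition insertion_split :: "ty \<Rightarrow> ty \<Rightarrow> label \<Rightarrow> ty \<Rightarrow> ty \<Rightarrow> ty \<Rightarrow> ty \<Rightarrow> ty \<Rightarrow> bool" where
  "insertion_split A B l \<rho>1 \<rho>21 \<rho>22 \<rho>11 \<rho>12 \<longleftrightarrow>
     is_row \<rho>11 \<and> is_row \<rho>12 \<and> closed_row \<rho>11 \<and>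
     \<rho>1 \<equiv>\<^sub>t rcat \<rho>11 \<rho>12 \<and>
     rcat \<rho>11 (RExt l A \<rho>12) \<sim> rcat \<rho>21 (RExt l B \<rho>22) \<and>
     (ends_dyn (rcat \<rho>21 \<rho>22) \<longrightarrow>
        (\<forall>\<rho>3. is_row \<rho>3 \<and> closed_row \<rho>3 \<and> rdom \<rho>3 \<inter> rdom (rcat \<rho>21 \<rho>22) = {} \<longrightarrow>
           rcat \<rho>11 (RExt l A (rcat \<rho>3 \<rho>12)) \<sim> rcat \<rho>21 (RExt l B \<rho>22))) \<and>
     l \<notin> rdom \<rho>11"

lemma insertion_splitI:
  assumes "is_row \<rho>11" "is_row \<rho>12" "closed_row \<rho>11" "\<rho>1 \<equiv>\<^sub>t rcat \<rho>11 \<rho>12"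
    "rcat \<rho>11 (RExt l A \<rho>12) \<sim> rcat \<rho>21 (RExt l B \<rho>22)"
    "\<And>\<rho>3. ends_dyn (rcat \<rho>21 \<rho>22) \<Longrightarrow> is_row \<rho>3 \<Longrightarrow> closed_row \<rho>3 \<Longrightarrow>
      rdom \<rho>3 \<inter> rdom (rcat \<rho>21 \<rho>22) = {} \<Longrightarrow>
      rcat \<rho>11 (RExt l A (rcat \<rho>3 \<rho>12)) \<sim> rcat \<rho>21 (RExt l B \<rho>22)"
    "l \<notin> rdom \<rho>11"
  shows "insertion_split A B l \<rho>1 \<rho>21 \<rho>22 \<rho>11 \<rho>12"
  using assms unfolding insertion_split_def by blast

lemma insertion_splitD:
  assumes "insertion_split A B l \<rho>1 \<rho>21 \<rho>22 \<rho>11 \<rho>12"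
  shows "is_row \<rho>11" "is_row \<rho>12" "closed_row \<rho>11" "\<rho>1 \<equiv>\<^sub>t rcat \<rho>11 \<rho>12"
    "rcat \<rho>11 (RExt l A \<rho>12) \<sim> rcat \<rho>21 (RExt l B \<rho>22)"
    "\<And>\<rho>3. ends_dyn (rcat \<rho>21 \<rho>22) \<Longrightarrow> is_row \<rho>3 \<Longrightarrow> closed_row \<rho>3 \<Longrightarrow>
      rdom \<rho>3 \<inter> rdom (rcat \<rho>21 \<rho>22) = {} \<Longrightarrow>
      rcat \<rho>11 (RExt l A (rcat \<rho>3 \<rho>12)) \<sim> rcat \<rho>21 (RExt l B \<rho>22)"
    "l \<notin> rdom \<rho>11"
  using assms unfolding insertion_split_def by blast+

lemma insertion_split_REmpty:
  assumes "A \<sim> B" "is_row \<rho>1" "\<rho>1 \<sim> \<rho>22"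
  shows "insertion_split A B l \<rho>1 REmpty \<rho>22 REmpty \<rho>1"
  using assms unfolding insertion_split_def
  by (auto intro: c_ext eqv_refl is_type_is_row.intros rcat_consistent_left)

lemma insertion_split_refl:
  assumes "A \<sim> B" "closed_row \<rho>21" "is_row \<rho>21" "is_row \<rho>22" "l \<notin> rdom \<rho>21"
  shows "insertion_split A B l (rcat \<rho>21 \<rho>22) \<rho>21 \<rho>22 \<rho>21 \<rho>22"
  using assms unfolding insertion_split_def
  by (auto intro: c_ext c_refl eqv_refl rcat_consistent_cong rcat_consistent_left)

lemma insertion_split_Dyn:
  assumes "A \<sim> B" "closed_row \<rho>21" "l \<notin> rdom \<rho>21"
  shows "insertion_split A B l Dyn \<rho>21 \<rho>22 REmpty Dyn"
  using assms unfolding insertion_split_def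
  by (auto intro!: c_ext c_dynL eqv_refl is_type_is_row.intros
    rcat_consistent_right rcat_consistent_left)

lemma insertion_split_RExt:
  assumes "insertion_split A B l \<rho>1 \<rho>21 \<rho>22 \<rho>11 \<rho>12" "D \<sim> C" "is_type D" "l \<noteq> l'"
  shows "insertion_split A B l (RExt l' D \<rho>1) (RExt l' C \<rho>21) \<rho>22 (RExt l' D \<rho>11) \<rho>12"
  using assms unfolding insertion_split_def
  by (auto intro: c_ext eqv_ext eqv_refl is_type_is_row.intros)

lemma insertion_split_extL:
  assumes "insertion_split A B l \<rho>1 \<rho>21 \<rho>22 \<rho>11 \<rho>12" "closed_row \<rho>21" "is_type D" "l \<noteq> l'"
    "l' \<notin> rdom (rcat \<rho>21 \<rho>22)" "ends_dyn (rcat \<rho>21 \<rho>22)"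
  shows "insertion_split A B l (RExt l' D \<rho>1) \<rho>21 \<rho>22 (RExt l' D \<rho>11) \<rho>12"
  using assms unfolding insertion_split_def
  by (auto intro!: c_extL eqv_ext eqv_refl is_type_is_row.intros)

lemma insertion_split_extL_same_label:
  assumes "insertion_split A B l \<rho>1 \<rho>21 \<rho>22 \<rho>11 \<rho>12" "closed_row \<rho>21" "is_type D"
    "l \<notin> rdom (rcat \<rho>21 \<rho>22)" "ends_dyn (rcat \<rho>21 \<rho>22)"
  shows "insertion_split A B l (RExt l D \<rho>1) \<rho>21 \<rho>22 \<rho>11 (RExt l D \<rho>12)"
proof -
  note split = insertion_splitD[OF assms(1)]
  have "RExt l D \<rho>1 \<equiv>\<^sub>t RExt l D (rcat \<rho>11 \<rho>12)"
    using split(4) by (rule eqv_ext[OF eqv_refl])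
  also have "\<dots> \<equiv>\<^sub>t rcat \<rho>11 (RExt l D \<rho>12)"
    using split(3,7) by (rule RExt_rcat_ty_eqv)
  finally have eqv: "RExt l D \<rho>1 \<equiv>\<^sub>t rcat \<rho>11 (RExt l D \<rho>12)" .
  have padded: "rcat \<rho>11 (RExt l A (rcat \<rho>3 (RExt l D \<rho>12))) \<sim> rcat \<rho>21 (RExt l B \<rho>22)"
    if "is_row \<rho>3" "closed_row \<rho>3" "rdom \<rho>3 \<inter> rdom (rcat \<rho>21 \<rho>22) = {}" for \<rho>3
    using split(6)[OF assms(5), of "rcat \<rho>3 (RExt l D REmpty)"] that assms(2-4)
    by (simp add: rcat_assoc is_row_rcat is_type_is_row.intros)
  have "rcat \<rho>11 (RExt l A (RExt l D \<rho>12)) \<sim> rcat \<rho>21 (RExt l B \<rho>22)"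
    using padded[of REmpty] by (simp add: is_type_is_row.intros)
  moreover have "is_row (RExt l D \<rho>12)"
    using split(2) assms(3) by (simp add: is_type_is_row.intros)
  ultimately show ?thesis
    using split eqv padded by (intro insertion_splitI)
qed

lemma insertion_split_extR:
  assumes "insertion_split A B l \<rho>1 \<rho>21 \<rho>22 \<rho>11 \<rho>12" "l \<noteq> l'" "l' \<notin> rdom \<rho>1" "ends_dyn \<rho>1"
  shows "insertion_split A B l \<rho>1 (RExt l' C \<rho>21) \<rho>22 \<rho>11 \<rho>12"
proof -
  note split = insertion_splitD[OF assms(1)]
  have "l' \<notin> rdom \<rho>11 \<union> rdom \<rho>12" "ends_dyn \<rho>12"
    using ty_eqv_rdom[OF split(4)] ty_eqv_ends_dyn[OF split(4)] split(3) assms(3,4) by auto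
  then have extR: "rcat \<rho>11 (RExt l A (rcat \<rho>3 \<rho>12)) \<sim> rcat (RExt l' C \<rho>21) (RExt l B \<rho>22)"
    if "closed_row \<rho>3" "l' \<notin> rdom \<rho>3"
      "rcat \<rho>11 (RExt l A (rcat \<rho>3 \<rho>12)) \<sim> rcat \<rho>21 (RExt l B \<rho>22)" for \<rho>3
    using that split(3) assms(2) by (auto intro: c_extR)
  show ?thesis
  proof (rule insertion_splitI[OF split(1-4) _ _ split(7)])
    show "rcat \<rho>11 (RExt l A \<rho>12) \<sim> rcat (RExt l' C \<rho>21) (RExt l B \<rho>22)"
      using extR[of REmpty] split(5) by simp
  next
    fix \<rho>3
    assume "ends_dyn (rcat (RExt l' C \<rho>21) \<rho>22)" "is_row \<rho>3" "closed_row \<rho>3"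
      "rdom \<rho>3 \<inter> rdom (rcat (RExt l' C \<rho>21) \<rho>22) = {}"
    then show "rcat \<rho>11 (RExt l A (rcat \<rho>3 \<rho>12)) \<sim> rcat (RExt l' C \<rho>21) (RExt l B \<rho>22)"
      using extR split(6) by auto
  qed
qed

lemma consistent_insertion_split:
  assumes "\<rho>1 \<sim> \<rho>2" "A \<sim> B" "is_row \<rho>1" "closed_row \<rho>21" "is_row \<rho>21" "is_row \<rho>22"
    "\<rho>2 = rcat \<rho>21 \<rho>22" "l \<notin> rdom \<rho>21"
  shows "\<exists>\<rho>11 \<rho>12. insertion_split A B l \<rho>1 \<rho>21 \<rho>22 \<rho>11 \<rho>12"
  \<comment> \<open>the derivation also stays a premise: it is the \<open>\<rho>1 \<sim> \<rho>22\<close> needed when \<open>\<rho>21 = \<cdot>\<close>\<close>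
  using assms(1) assms(1,3-)
proof (induction arbitrary: \<rho>21 \<rho>22 rule: consistent.induct)
  case (c_refl \<rho>)
  then show ?case
    using insertion_split_refl[OF assms(2)] by blast
next
  case (c_dynL \<rho>)
  then show ?case
    using insertion_split_Dyn[OF assms(2)] by blast
next
  case (c_dynR \<rho>)
  then have "\<rho>21 = REmpty" "\<rho>22 = Dyn"
    by (cases \<rho>21; simp)+
  with c_dynR.prems(1,2) show ?case
    using insertion_split_REmpty[OF assms(2)] by blast
next
  case (c_allR \<rho> \<sigma> K)
  then have "\<rho>21 = REmpty" "\<rho>22 = All K \<sigma>"
    by (cases \<rho>21; simp)+
  with c_allR.prems(1,2) show ?case
    using insertion_split_REmpty[OF assms(2)] by blast
next
  case (c_ext D C \<rho>1 \<rho>2 l')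
  from c_ext.prems(3,6) show ?case
  proof (cases rule: rcat_eq_RExtE)
    case 1
    with c_ext.prems(6) have "\<rho>22 = RExt l' C \<rho>2"
      by simp
    with c_ext.prems(1,2) 1 show ?thesis
      using insertion_split_REmpty[OF assms(2)] by blast
  next
    case (2 \<rho>21')
    have "is_type D" "is_row \<rho>1"
      using c_ext.prems(2) by (auto elim: is_row_RExtE)
    moreover have "is_row \<rho>21'" "l \<notin> rdom \<rho>21'" "l \<noteq> l'"
      using c_ext.prems(4,7) 2(1) by (auto elim: is_row_RExtE)
    ultimately obtain \<rho>11 \<rho>12 where "insertion_split A B l \<rho>1 \<rho>21' \<rho>22 \<rho>11 \<rho>12"
      using c_ext.IH(2)[OF c_ext.hyps(2) _ 2(2) _ c_ext.prems(5) 2(3)] by blast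
    from insertion_split_RExt[OF this c_ext.hyps(1) \<open>is_type D\<close> \<open>l \<noteq> l'\<close>] 2(1)
    show ?thesis by blast
  qed
next
  case (c_extL l' \<rho>2 \<rho>1 D)
  have "is_type D" "is_row \<rho>1"
    using c_extL.prems(2) by (auto elim: is_row_RExtE)
  then obtain \<rho>11 \<rho>12 where split: "insertion_split A B l \<rho>1 \<rho>21 \<rho>22 \<rho>11 \<rho>12"
    using c_extL.IH[OF c_extL.hyps(3) _ c_extL.prems(3-7)] by blast
  have fresh: "l' \<notin> rdom (rcat \<rho>21 \<rho>22)" and ends: "ends_dyn (rcat \<rho>21 \<rho>22)"
    using c_extL.hyps(1,2) c_extL.prems(6) by simp_all
  show ?case
  proof (cases "l' = l")
    case True
    with insertion_split_extL_same_label[OF split c_extL.prems(3) \<open>is_type D\<close>] fresh ends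
    show ?thesis by blast
  next
    case False
    with insertion_split_extL[OF split c_extL.prems(3) \<open>is_type D\<close> _ fresh ends]
    show ?thesis by blast
  qed
next
  case (c_extR l' \<rho>1 \<rho>2 C)
  from c_extR.prems(3,6) show ?case
  proof (cases rule: rcat_eq_RExtE)
    case 1
    with c_extR.prems(6) have "\<rho>22 = RExt l' C \<rho>2"
      by simp
    with c_extR.prems(1,2) 1 show ?thesis
      using insertion_split_REmpty[OF assms(2)] by blast
  next
    case (2 \<rho>21')
    have "is_row \<rho>21'" "l \<notin> rdom \<rho>21'" "l \<noteq> l'"
      using c_extR.prems(4,7) 2(1) by (auto elim: is_row_RExtE)
    then obtain \<rho>11 \<rho>12 where "insertion_split A B l \<rho>1 \<rho>21' \<rho>22 \<rho>11 \<rho>12"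
      using c_extR.IH[OF c_extR.hyps(3) c_extR.prems(2) 2(2) _ c_extR.prems(5) 2(3)] by blast
    from insertion_split_extR[OF this \<open>l \<noteq> l'\<close> c_extR.hyps(1,2)] 2(1)
    show ?thesis by blast
  qed
qed (auto elim: is_row.cases)

theorem mainTheorem12:
  assumes "is_type A" and "is_type B" and "A \<sim> B"
    and "is_row \<rho>1" and "is_row \<rho>21" and "is_row \<rho>22"
    and "closed_row \<rho>21"
    and "\<rho>1 \<sim> rcat \<rho>21 \<rho>22"
    and "l \<notin> rdom \<rho>21"
  shows "\<exists>\<rho>11 \<rho>12. is_row \<rho>11 \<and> is_row \<rho>12 \<and> closed_row \<rho>11 \<and>
           \<rho>1 \<equiv>\<^sub>t rcat \<rho>11 \<rho>12 \<and>
           rcat \<rho>11 (RExt l A \<rho>12) \<sim> rcat \<rho>21 (RExt l B \<rho>22) \<and>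
           (ends_dyn (rcat \<rho>21 \<rho>22) \<longrightarrow>
              (\<forall>\<rho>3. is_row \<rho>3 \<and> closed_row \<rho>3 \<and> rdom \<rho>3 \<inter> rdom (rcat \<rho>21 \<rho>22) = {} \<longrightarrow>
                 rcat \<rho>11 (RExt l A (rcat \<rho>3 \<rho>12)) \<sim> rcat \<rho>21 (RExt l B \<rho>22))) \<and>
           l \<notin> rdom \<rho>11"
  using consistent_insertion_split[OF assms(8,3,4,7,5,6) refl assms(9)]
  unfolding insertion_split_def .

end
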